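(* Let $(\Omega,\mathscr A)$ be a measurable space, $\mathscr C\subseteq\mathscr A$ a concept class, and $I$ an ideal of subsets of $\Omega$. Let $S_I$ be the set of all ultrafilters on $\Omega$ containing no element of $I$, and regard each $C\in\mathscr C$ as the $\{0,1\}$-valued function $\xi\mapsto[C\in\xi]$ on $S_I$. For each $n\in\mathbb N$ the following are equivalent: (1) the VC dimension of $\mathscr C$ as a class of functions on $S_I$ is at least $n$; (2) there exist sets $A_1,\dots,A_n\subseteq\Omega$, none belonging to $I$, such that for every $J\subseteq\{1,\dots,n\}$ there is $C\in\mathscr C$ with $A_i\subseteq C$ for all $i\in J$ and $A_i\cap C=\emptyset$ for all $i\notin J$. Moreover, in (2) the sets $A_i$ can be chosen in $\mathscr A$.
   Context: An ideal of subsets of $\Omega$ is a family closed under finite unions and under taking subsets. An ultrafilter on $\Omega$ is a family $\xi$ of nonempty subsets closed under finite intersections such that for each $A\subseteq\Omega$ either $A\in\xi$ or $\Omega\setminus A\in\xi$. ($S_I$ is the Stone space of the quotient Boolean algebra $2^\Omega/I$.) *)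

theory Defs
  imports "HOL-Analysis.Analysis"
begin

definition is_ideal_on :: "'a set \<Rightarrow> 'a set set \<Rightarrow> bool" where
  "is_ideal_on \<Omega> I \<longleftrightarrow> I \<subseteq> Pow \<Omega> \<and> {} \<in> I \<and>
     (\<forall>A\<in>I. \<forall>B\<in>I. A \<union> B \<in> I) \<and> (\<forall>A\<in>I. \<forall>B. B \<subseteq> A \<longrightarrow> B \<in> I)"

definition is_ultrafilter_on :: "'a set \<Rightarrow> 'a set set \<Rightarrow> bool" where
  "is_ultrafilter_on \<Omega> \<xi> \<longleftrightarrow> (\<forall>A\<in>\<xi>. A \<subseteq> \<Omega> \<and> A \<noteq> {}) \<and>
     (\<forall>A\<in>\<xi>. \<forall>B\<in>\<xi>. A \<inter> B \<in> \<xi>) \<and>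
     (\<forall>A. A \<subseteq> \<Omega> \<longrightarrow> A \<in> \<xi> \<or> \<Omega> - A \<in> \<xi>)"

definition stone_space :: "'a set \<Rightarrow> 'a set set \<Rightarrow> 'a set set set" where
  "stone_space \<Omega> I = {\<xi>. is_ultrafilter_on \<Omega> \<xi> \<and> \<xi> \<inter> I = {}}"

definition shatters :: "'x set \<Rightarrow> ('x \<Rightarrow> bool) set \<Rightarrow> 'x set \<Rightarrow> bool" where
  "shatters D H X \<longleftrightarrow> X \<subseteq> D \<and>
     (\<forall>Y. Y \<subseteq> X \<longrightarrow> (\<exists>h\<in>H. \<forall>x\<in>X. h x \<longleftrightarrow> x \<in> Y))"

definition vc_dim_ge :: "'x set \<Rightarrow> ('x \<Rightarrow> bool) set \<Rightarrow> nat \<Rightarrow> bool" where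
  "vc_dim_ge D H n \<longleftrightarrow> (\<exists>X. finite X \<and> card X = n \<and> shatters D H X)"

end

theory Submission
  imports Defs
begin

(* A point of the Stone space S_I is an ultrafilter avoiding the ideal I,
   and a concept C is "true" at xi iff C \<in> xi.
   (2) \<Rightarrow> (1): every set A \<notin> I lies in some xi \<in> S_I (Zorn's lemma applied to the filter
   generated by A and the dual filter of I).  Choosing xi_i \<ni> A_i, a concept C with
   A_i \<subseteq> C for i \<in> J and A_i \<inter> C = {} otherwise belongs to xi_i exactly for i \<in> J,
   so the points xi_1, ..., xi_n are distinct and shattered.
   (1) \<Rightarrow> (2): if a finite set X \<subseteq> S_I is shattered, fix for every Y \<subseteq> X a concept C_Y
   cutting out Y.  The "atom" of xi \<in> X, the intersection over Y of C_Y or its complement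
   according to whether xi \<in> Y, is a finite Boolean combination of concepts, hence lies
   in every algebra of sets containing the class; it belongs to xi (so it is not in I)
   and it is contained in C_Y or disjoint from it according to whether xi \<in> Y. *)

lemma ultrafilter_disjoint:
  "is_ultrafilter_on \<Omega> \<xi> \<Longrightarrow> A \<in> \<xi> \<Longrightarrow> B \<in> \<xi> \<Longrightarrow> A \<inter> B \<noteq> {}"
  unfolding is_ultrafilter_on_def by blast

lemma ultrafilter_compl:
  "is_ultrafilter_on \<Omega> \<xi> \<Longrightarrow> A \<subseteq> \<Omega> \<Longrightarrow> A \<notin> \<xi> \<Longrightarrow> \<Omega> - A \<in> \<xi>"
  unfolding is_ultrafilter_on_def by blast

text \<open>Ultrafilters are upward closed within \<open>\<Omega>\<close>: otherwise the complement of the larger set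
  would be a member disjoint from the smaller one.\<close>
lemma ultrafilter_mono:
  assumes u: "is_ultrafilter_on \<Omega> \<xi>" and "A \<in> \<xi>" "A \<subseteq> B" "B \<subseteq> \<Omega>"
  shows "B \<in> \<xi>"
proof (rule ccontr)
  assume "B \<notin> \<xi>"
  then have "\<Omega> - B \<in> \<xi>" using ultrafilter_compl[OF u] assms(4) by blast
  with ultrafilter_disjoint[OF u \<open>A \<in> \<xi>\<close>] assms(3) show False by blast
qed

lemma ultrafilter_space:
  assumes "is_ultrafilter_on \<Omega> \<xi>" shows "\<Omega> \<in> \<xi>"
proof -
  have "{} \<in> \<xi> \<or> \<Omega> - {} \<in> \<xi>" "{} \<notin> \<xi>"
    using assms unfolding is_ultrafilter_on_def by blast+
  then show ?thesis by simp
qed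

text \<open>Closure under finite intersections (relativised to \<open>\<Omega>\<close> so that the empty family is
  covered).\<close>
lemma ultrafilter_finite_Inter:
  assumes u: "is_ultrafilter_on \<Omega> \<xi>" and "finite F" "F \<subseteq> \<xi>"
  shows "\<Omega> \<inter> \<Inter>F \<in> \<xi>"
  using assms(2,3)
proof (induction F rule: finite_induct)
  case empty
  then show ?case using ultrafilter_space[OF u] by simp
next
  case (insert x F)
  then have "(\<Omega> \<inter> \<Inter>F) \<inter> x \<in> \<xi>" using u unfolding is_ultrafilter_on_def by auto
  then show ?case by (simp add: Int_ac)
qed

section \<open>Extending filters to ultrafilters\<close>

definition proper_filter_on :: "'a set \<Rightarrow> 'a set set \<Rightarrow> bool" where
  "proper_filter_on \<Omega> F \<longleftrightarrow> F \<subseteq> Pow \<Omega> \<and> {} \<notin> F \<and> \<Omega> \<in> F \<and>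
     (\<forall>A\<in>F. \<forall>B\<in>F. A \<inter> B \<in> F) \<and> (\<forall>A\<in>F. \<forall>B. A \<subseteq> B \<and> B \<subseteq> \<Omega> \<longrightarrow> B \<in> F)"

lemma proper_filter_upward:
  "proper_filter_on \<Omega> F \<Longrightarrow> A \<in> F \<Longrightarrow> A \<subseteq> B \<Longrightarrow> B \<subseteq> \<Omega> \<Longrightarrow> B \<in> F"
  unfolding proper_filter_on_def by blast

lemma proper_filter_chain_Union:
  assumes ne: "\<F> \<noteq> {}" and filt: "\<And>F. F \<in> \<F> \<Longrightarrow> proper_filter_on \<Omega> F"
    and chain: "\<And>F G. F \<in> \<F> \<Longrightarrow> G \<in> \<F> \<Longrightarrow> F \<subseteq> G \<or> G \<subseteq> F"
  shows "proper_filter_on \<Omega> (\<Union>\<F>)"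
  unfolding proper_filter_on_def
proof (intro conjI ballI allI impI)
  show "\<Union>\<F> \<subseteq> Pow \<Omega>" "{} \<notin> \<Union>\<F>"
    using filt unfolding proper_filter_on_def by blast+
  show "\<Omega> \<in> \<Union>\<F>" using ne filt unfolding proper_filter_on_def by blast
next
  fix A B assume "A \<in> \<Union>\<F>" "B \<in> \<Union>\<F>"
  then obtain F G where "F \<in> \<F>" "A \<in> F" "G \<in> \<F>" "B \<in> G" by blast
  with chain[of F G] have "\<exists>H\<in>\<F>. A \<in> H \<and> B \<in> H" by blast
  then show "A \<inter> B \<in> \<Union>\<F>" using filt unfolding proper_filter_on_def by blast
next
  fix A B assume "A \<in> \<Union>\<F>" "A \<subseteq> B \<and> B \<subseteq> \<Omega>"
  then show "B \<in> \<Union>\<F>" using filt unfolding proper_filter_on_def by blast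
qed

lemma proper_filter_adjoin:
  assumes F: "proper_filter_on \<Omega> F" and "A \<subseteq> \<Omega>" and meets: "\<forall>B\<in>F. B \<inter> A \<noteq> {}"
  shows "proper_filter_on \<Omega> {X. X \<subseteq> \<Omega> \<and> (\<exists>B\<in>F. B \<inter> A \<subseteq> X)}"
  unfolding proper_filter_on_def
proof (intro conjI ballI allI impI)
  fix X Y assume "X \<in> {X. X \<subseteq> \<Omega> \<and> (\<exists>B\<in>F. B \<inter> A \<subseteq> X)}" "Y \<in> {X. X \<subseteq> \<Omega> \<and> (\<exists>B\<in>F. B \<inter> A \<subseteq> X)}"
  then obtain B1 B2 where "B1 \<in> F" "B1 \<inter> A \<subseteq> X" "B2 \<in> F" "B2 \<inter> A \<subseteq> Y" "X \<subseteq> \<Omega>" "Y \<subseteq> \<Omega>"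
    by blast
  moreover have "B1 \<inter> B2 \<in> F" using F \<open>B1 \<in> F\<close> \<open>B2 \<in> F\<close> unfolding proper_filter_on_def by blast
  ultimately show "X \<inter> Y \<in> {X. X \<subseteq> \<Omega> \<and> (\<exists>B\<in>F. B \<inter> A \<subseteq> X)}" by blast
next
  have "\<Omega> \<in> F" using F unfolding proper_filter_on_def by blast
  then show "\<Omega> \<in> {X. X \<subseteq> \<Omega> \<and> (\<exists>B\<in>F. B \<inter> A \<subseteq> X)}" by blast
next
  show "{} \<notin> {X. X \<subseteq> \<Omega> \<and> (\<exists>B\<in>F. B \<inter> A \<subseteq> X)}" using meets by blast
next
  fix X Y assume "X \<in> {X. X \<subseteq> \<Omega> \<and> (\<exists>B\<in>F. B \<inter> A \<subseteq> X)}" "X \<subseteq> Y \<and> Y \<subseteq> \<Omega>"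
  then show "Y \<in> {X. X \<subseteq> \<Omega> \<and> (\<exists>B\<in>F. B \<inter> A \<subseteq> X)}" by blast
qed blast

text \<open>A maximal proper filter is an ultrafilter: if neither \<open>A\<close> nor its complement is in
  it, then \<open>A\<close> meets every member and could be adjoined.\<close>
lemma maximal_proper_filter_is_ultrafilter:
  assumes M: "proper_filter_on \<Omega> M"
    and max: "\<And>N. proper_filter_on \<Omega> N \<Longrightarrow> M \<subseteq> N \<Longrightarrow> N = M"
  shows "is_ultrafilter_on \<Omega> M"
  unfolding is_ultrafilter_on_def
proof (intro conjI ballI allI impI)
  fix A assume "A \<in> M" then show "A \<subseteq> \<Omega>" "A \<noteq> {}" using M unfolding proper_filter_on_def by blast+
next
  fix A B assume "A \<in> M" "B \<in> M" then show "A \<inter> B \<in> M" using M unfolding proper_filter_on_def by blast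
next
  fix A assume A: "A \<subseteq> \<Omega>"
  show "A \<in> M \<or> \<Omega> - A \<in> M"
  proof (cases "\<forall>B\<in>M. B \<inter> A \<noteq> {}")
    case True
    define N where "N = {X. X \<subseteq> \<Omega> \<and> (\<exists>B\<in>M. B \<inter> A \<subseteq> X)}"
    have "M \<subseteq> Pow \<Omega>" "\<Omega> \<in> M" using M unfolding proper_filter_on_def by blast+
    then have "M \<subseteq> N" "A \<in> N" using A unfolding N_def by blast+
    moreover have "proper_filter_on \<Omega> N" unfolding N_def using proper_filter_adjoin[OF M A True] .
    ultimately show ?thesis using max by blast
  next
    case False
    then obtain B where B: "B \<in> M" "B \<inter> A = {}" by blast
    have "B \<subseteq> \<Omega>" using M B(1) unfolding proper_filter_on_def by blast
    with B have "\<Omega> - A \<in> M" by (intro proper_filter_upward[OF M B(1)]) blast+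
    then show ?thesis ..
  qed
qed

lemma ultrafilter_extension:
  assumes F0: "proper_filter_on \<Omega> F0"
  obtains \<xi> where "is_ultrafilter_on \<Omega> \<xi>" "F0 \<subseteq> \<xi>"
proof -
  let ?S = "{F. proper_filter_on \<Omega> F \<and> F0 \<subseteq> F}"
  have "\<exists>M\<in>?S. \<forall>N\<in>?S. M \<subseteq> N \<longrightarrow> N = M"
  proof (rule subset_Zorn_nonempty)
    fix \<F> assume ne: "\<F> \<noteq> {}" and ch: "subset.chain ?S \<F>"
    have filt: "\<And>F. F \<in> \<F> \<Longrightarrow> proper_filter_on \<Omega> F"
      and base: "\<And>F. F \<in> \<F> \<Longrightarrow> F0 \<subseteq> F"
      and chain: "\<And>F G. F \<in> \<F> \<Longrightarrow> G \<in> \<F> \<Longrightarrow> F \<subseteq> G \<or> G \<subseteq> F"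
      using ch by (auto simp: subset_chain_def)
    have "proper_filter_on \<Omega> (\<Union>\<F>)" by (rule proper_filter_chain_Union[OF ne filt chain])
    moreover have "F0 \<subseteq> \<Union>\<F>" using ne base by blast
    ultimately show "\<Union>\<F> \<in> ?S" by blast
  qed (use F0 in blast)
  then obtain M where M: "M \<in> ?S" and max: "\<forall>N\<in>?S. M \<subseteq> N \<longrightarrow> N = M" ..
  have "is_ultrafilter_on \<Omega> M"
  proof (rule maximal_proper_filter_is_ultrafilter)
    show "proper_filter_on \<Omega> M" using M by simp
    fix N assume "proper_filter_on \<Omega> N" "M \<subseteq> N"
    then show "N = M" using max M by blast
  qed
  then show ?thesis using that M by simp
qed

lemma dual_filter_of_ideal:
  assumes I: "is_ideal_on \<Omega> I" and "\<Omega> \<notin> I"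
  shows "proper_filter_on \<Omega> {B. B \<subseteq> \<Omega> \<and> \<Omega> - B \<in> I}"
  unfolding proper_filter_on_def
proof (intro conjI ballI allI impI)
  fix A B assume "A \<in> {B. B \<subseteq> \<Omega> \<and> \<Omega> - B \<in> I}" "B \<in> {B. B \<subseteq> \<Omega> \<and> \<Omega> - B \<in> I}"
  then have "(\<Omega> - A) \<union> (\<Omega> - B) \<in> I" "A \<inter> B \<subseteq> \<Omega>" using I unfolding is_ideal_on_def by blast+
  then show "A \<inter> B \<in> {B. B \<subseteq> \<Omega> \<and> \<Omega> - B \<in> I}" by (simp add: Diff_Int)
next
  fix A B assume "A \<in> {B. B \<subseteq> \<Omega> \<and> \<Omega> - B \<in> I}" "A \<subseteq> B \<and> B \<subseteq> \<Omega>"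
  moreover have "\<Omega> - B \<subseteq> \<Omega> - A" using calculation(2) by blast
  ultimately show "B \<in> {B. B \<subseteq> \<Omega> \<and> \<Omega> - B \<in> I}" using I unfolding is_ideal_on_def by blast
qed (use assms in \<open>auto simp: is_ideal_on_def\<close>)

text \<open>Every set outside the ideal is a member of some point of the Stone space: extend the
  filter generated by \<open>A\<close> and the dual filter of \<open>I\<close> to an ultrafilter.\<close>
lemma stone_point:
  assumes I: "is_ideal_on \<Omega> I" and A: "A \<subseteq> \<Omega>" "A \<notin> I"
  obtains \<xi> where "\<xi> \<in> stone_space \<Omega> I" "A \<in> \<xi>"
proof -
  let ?D = "{B. B \<subseteq> \<Omega> \<and> \<Omega> - B \<in> I}"
  have down: "\<And>K L. K \<in> I \<Longrightarrow> L \<subseteq> K \<Longrightarrow> L \<in> I" using I unfolding is_ideal_on_def by blast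
  have "\<Omega> \<notin> I" using down A by blast
  then have D: "proper_filter_on \<Omega> ?D" by (rule dual_filter_of_ideal[OF I])
  have meets: "\<forall>B\<in>?D. B \<inter> A \<noteq> {}"
  proof (intro ballI notI)
    fix B assume "B \<in> ?D" "B \<inter> A = {}"
    then have "A \<subseteq> \<Omega> - B" "\<Omega> - B \<in> I" using A by blast+
    then show False using down A(2) by blast
  qed
  obtain \<xi> where u: "is_ultrafilter_on \<Omega> \<xi>"
    and sub: "{X. X \<subseteq> \<Omega> \<and> (\<exists>B\<in>?D. B \<inter> A \<subseteq> X)} \<subseteq> \<xi>"
    using ultrafilter_extension[OF proper_filter_adjoin[OF D A(1) meets]] by blast
  have "?D \<subseteq> {X. X \<subseteq> \<Omega> \<and> (\<exists>B\<in>?D. B \<inter> A \<subseteq> X)}" by blast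
  then have "?D \<subseteq> \<xi>" using sub by (rule order_trans)
  have "\<Omega> \<in> ?D" using I unfolding is_ideal_on_def by simp
  then have "A \<in> {X. X \<subseteq> \<Omega> \<and> (\<exists>B\<in>?D. B \<inter> A \<subseteq> X)}" using A(1) by blast
  then have "A \<in> \<xi>" using sub by blast
  have "\<xi> \<inter> I = {}"
  proof (rule ccontr)
    assume "\<xi> \<inter> I \<noteq> {}"
    then obtain K where "K \<in> \<xi>" "K \<in> I" by blast
    moreover have "K \<subseteq> \<Omega>" using u \<open>K \<in> \<xi>\<close> unfolding is_ultrafilter_on_def by blast
    ultimately have "\<Omega> - K \<in> \<xi>" using \<open>?D \<subseteq> \<xi>\<close> by (auto simp: double_diff)
    then show False using ultrafilter_disjoint[OF u \<open>K \<in> \<xi>\<close>] by blast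
  qed
  then show ?thesis using that u \<open>A \<in> \<xi>\<close> unfolding stone_space_def by blast
qed

section \<open>Separated families and shattered sets of Stone points\<close>

definition separates :: "'a set set \<Rightarrow> (nat \<Rightarrow> 'a set) \<Rightarrow> nat \<Rightarrow> bool" where
  "separates \<C> A n \<longleftrightarrow>
     (\<forall>J \<subseteq> {..<n}. \<exists>C\<in>\<C>. (\<forall>i\<in>J. A i \<subseteq> C) \<and> (\<forall>i\<in>{..<n} - J. A i \<inter> C = {}))"

lemma separated_family_gives_vc_dim:
  assumes I: "is_ideal_on \<Omega> I" and C: "\<C> \<subseteq> Pow \<Omega>"
    and A: "\<And>i. i < n \<Longrightarrow> A i \<subseteq> \<Omega> \<and> A i \<notin> I" and sep: "separates \<C> A n"
  shows "vc_dim_ge (stone_space \<Omega> I) ((\<lambda>C \<xi>. C \<in> \<xi>) ` \<C>) n"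
proof -
  have "\<forall>i. \<exists>\<xi>. i < n \<longrightarrow> \<xi> \<in> stone_space \<Omega> I \<and> A i \<in> \<xi>"
    using stone_point[OF I] A by metis
  then obtain \<xi> where \<xi>: "\<And>i. i < n \<Longrightarrow> \<xi> i \<in> stone_space \<Omega> I \<and> A i \<in> \<xi> i" by metis
  have u: "\<And>i. i < n \<Longrightarrow> is_ultrafilter_on \<Omega> (\<xi> i)" using \<xi> by (auto simp: stone_space_def)
  have realise: "C \<in> \<xi> i \<longleftrightarrow> i \<in> J"
    if "i < n" "C \<in> \<C>" "\<forall>i\<in>J. A i \<subseteq> C" "\<forall>i\<in>{..<n} - J. A i \<inter> C = {}" for i C J
  proof (cases "i \<in> J")
    case True
    then have "A i \<subseteq> C" "C \<subseteq> \<Omega>" using that C by blast+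
    then have "C \<in> \<xi> i" using ultrafilter_mono[OF u[OF that(1)]] \<xi>[OF that(1)] by blast
    then show ?thesis using True by simp
  next
    case False
    then have "A i \<inter> C = {}" using that(1,4) by auto
    then have "C \<notin> \<xi> i" using ultrafilter_disjoint[OF u[OF that(1)]] \<xi>[OF that(1)] by blast
    then show ?thesis using False by simp
  qed
  have pattern: "\<exists>C\<in>\<C>. \<forall>i<n. C \<in> \<xi> i \<longleftrightarrow> i \<in> J" if J: "J \<subseteq> {..<n}" for J
  proof -
    obtain C where C: "C \<in> \<C>" "\<forall>i\<in>J. A i \<subseteq> C" "\<forall>i\<in>{..<n} - J. A i \<inter> C = {}"
      using sep[unfolded separates_def, rule_format, OF J] by (elim bexE conjE)
    have "\<forall>i<n. C \<in> \<xi> i \<longleftrightarrow> i \<in> J"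
      using realise[OF _ C] by blast
    with C(1) show ?thesis ..
  qed
  have inj: "inj_on \<xi> {..<n}"
  proof (rule inj_onI)
    fix i j assume "i \<in> {..<n}" "j \<in> {..<n}" "\<xi> i = \<xi> j"
    then show "i = j" using pattern[of "{i}"] by auto
  qed
  have "shatters (stone_space \<Omega> I) ((\<lambda>C \<xi>. C \<in> \<xi>) ` \<C>) (\<xi> ` {..<n})"
    unfolding shatters_def
  proof (intro conjI allI impI)
    show "\<xi> ` {..<n} \<subseteq> stone_space \<Omega> I" using \<xi> by blast
  next
    fix Y assume "Y \<subseteq> \<xi> ` {..<n}"
    obtain C where "C \<in> \<C>" "\<forall>i<n. C \<in> \<xi> i \<longleftrightarrow> i \<in> {i. \<xi> i \<in> Y}"
      using pattern[of "{i. i < n \<and> \<xi> i \<in> Y}"] by auto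
    then show "\<exists>h\<in>(\<lambda>C \<xi>. C \<in> \<xi>) ` \<C>. \<forall>x\<in>\<xi> ` {..<n}. h x \<longleftrightarrow> x \<in> Y" by auto
  qed
  moreover have "card (\<xi> ` {..<n}) = n" using card_image[OF inj] by simp
  ultimately show ?thesis unfolding vc_dim_ge_def by blast
qed

lemma shattered_set_atoms:
  assumes S: "algebra \<Omega> S" and C: "\<C> \<subseteq> S" and "finite X"
    and sh: "shatters (stone_space \<Omega> I) ((\<lambda>C \<xi>. C \<in> \<xi>) ` \<C>) X"
  obtains a where "\<And>\<xi>. \<xi> \<in> X \<Longrightarrow> a \<xi> \<in> S \<and> a \<xi> \<in> \<xi>"
    and "\<And>Y. Y \<subseteq> X \<Longrightarrow> \<exists>C\<in>\<C>. \<forall>\<xi>\<in>X. (\<xi> \<in> Y \<longrightarrow> a \<xi> \<subseteq> C) \<and> (\<xi> \<notin> Y \<longrightarrow> a \<xi> \<inter> C = {})"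
proof -
  interpret algebra \<Omega> S by (rule S)
  have "\<forall>Y. \<exists>C. Y \<subseteq> X \<longrightarrow> C \<in> \<C> \<and> (\<forall>\<xi>\<in>X. C \<in> \<xi> \<longleftrightarrow> \<xi> \<in> Y)"
    using sh unfolding shatters_def by blast
  then obtain cut where cut: "\<And>Y. Y \<subseteq> X \<Longrightarrow> cut Y \<in> \<C> \<and> (\<forall>\<xi>\<in>X. cut Y \<in> \<xi> \<longleftrightarrow> \<xi> \<in> Y)"
    by metis
  define side where "side \<xi> Y = (if \<xi> \<in> Y then cut Y else \<Omega> - cut Y)" for \<xi> Y
  define a where "a \<xi> = \<Omega> \<inter> \<Inter>(side \<xi> ` Pow X)" for \<xi>
  show ?thesis
  proof
    fix \<xi> assume "\<xi> \<in> X"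
    have u: "is_ultrafilter_on \<Omega> \<xi>" using sh \<open>\<xi> \<in> X\<close> by (auto simp: shatters_def stone_space_def)
    have side_S: "side \<xi> Y \<in> S" and side_in: "side \<xi> Y \<in> \<xi>" if "Y \<subseteq> X" for Y
      using cut[OF that] C sets_into_space ultrafilter_compl[OF u] \<open>\<xi> \<in> X\<close>
      unfolding side_def by auto
    have "(\<Inter>Y\<in>Pow X. side \<xi> Y) \<in> S"
      by (rule finite_INT) (use side_S \<open>finite X\<close> in auto)
    then have "\<Omega> \<inter> \<Inter>(side \<xi> ` Pow X) \<in> S" by (rule Int[OF top])
    moreover have "side \<xi> ` Pow X \<subseteq> \<xi>" using side_in by blast
    then have "\<Omega> \<inter> \<Inter>(side \<xi> ` Pow X) \<in> \<xi>"
      using ultrafilter_finite_Inter[OF u] \<open>finite X\<close> by simp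
    ultimately show "a \<xi> \<in> S \<and> a \<xi> \<in> \<xi>" unfolding a_def by simp
  next
    fix Y assume "Y \<subseteq> X"
    have atom_side: "a \<xi> \<subseteq> side \<xi> Y" for \<xi> unfolding a_def using \<open>Y \<subseteq> X\<close> by blast
    have "\<forall>\<xi>\<in>X. (\<xi> \<in> Y \<longrightarrow> a \<xi> \<subseteq> cut Y) \<and> (\<xi> \<notin> Y \<longrightarrow> a \<xi> \<inter> cut Y = {})"
    proof (intro ballI conjI impI)
      fix \<xi> assume "\<xi> \<in> Y"
      then show "a \<xi> \<subseteq> cut Y" using atom_side[of \<xi>] by (simp add: side_def)
    next
      fix \<xi> assume "\<xi> \<notin> Y"
      then show "a \<xi> \<inter> cut Y = {}" using atom_side[of \<xi>] by (auto simp: side_def)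
    qed
    then show "\<exists>C\<in>\<C>. \<forall>\<xi>\<in>X. (\<xi> \<in> Y \<longrightarrow> a \<xi> \<subseteq> C) \<and> (\<xi> \<notin> Y \<longrightarrow> a \<xi> \<inter> C = {})"
      using cut[OF \<open>Y \<subseteq> X\<close>] by blast
  qed
qed

text \<open>Direction (1) \<Rightarrow> (2), with the separated sets taken from any algebra containing
  the class: enumerate a shattered set and take its atoms.\<close>
lemma vc_dim_gives_separated_family:
  assumes S: "algebra \<Omega> S" and C: "\<C> \<subseteq> S"
    and vc: "vc_dim_ge (stone_space \<Omega> I) ((\<lambda>C \<xi>. C \<in> \<xi>) ` \<C>) n"
  obtains A where "\<And>i. i < n \<Longrightarrow> A i \<in> S \<and> A i \<notin> I" and "separates \<C> A n"
proof -
  obtain X where X: "finite X" "card X = n" and sh: "shatters (stone_space \<Omega> I) ((\<lambda>C \<xi>. C \<in> \<xi>) ` \<C>) X"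
    using vc unfolding vc_dim_ge_def by blast
  obtain a where a: "\<And>\<xi>. \<xi> \<in> X \<Longrightarrow> a \<xi> \<in> S \<and> a \<xi> \<in> \<xi>"
    and a_sep: "\<And>Y. Y \<subseteq> X \<Longrightarrow> \<exists>C\<in>\<C>. \<forall>\<xi>\<in>X. (\<xi> \<in> Y \<longrightarrow> a \<xi> \<subseteq> C) \<and> (\<xi> \<notin> Y \<longrightarrow> a \<xi> \<inter> C = {})"
    using shattered_set_atoms[OF S C X(1) sh] by blast
  obtain f where f: "bij_betw f {..<n} X"
    using ex_bij_betw_nat_finite[OF X(1)] X(2) by (auto simp: atLeast0LessThan)
  show ?thesis
  proof
    fix i assume "i < n"
    then have "f i \<in> X" using f by (auto simp: bij_betw_def)
    moreover have "f i \<inter> I = {}" using sh \<open>f i \<in> X\<close> by (auto simp: shatters_def stone_space_def)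
    ultimately show "(a \<circ> f) i \<in> S \<and> (a \<circ> f) i \<notin> I" using a by auto
  next
    show "separates \<C> (a \<circ> f) n" unfolding separates_def
    proof (intro allI impI)
      fix J assume J: "J \<subseteq> {..<n}"
      have fX: "\<And>i. i < n \<Longrightarrow> f i \<in> X" and fJ: "\<And>i. i < n \<Longrightarrow> f i \<in> f ` J \<longleftrightarrow> i \<in> J"
        using f J by (auto simp: bij_betw_def inj_on_def)
      have "f ` J \<subseteq> X" using fX J by auto
      then obtain C where "C \<in> \<C>"
        and C: "\<forall>\<xi>\<in>X. (\<xi> \<in> f ` J \<longrightarrow> a \<xi> \<subseteq> C) \<and> (\<xi> \<notin> f ` J \<longrightarrow> a \<xi> \<inter> C = {})"
        by (elim a_sep[THEN bexE])
      have "(\<forall>i\<in>J. (a \<circ> f) i \<subseteq> C) \<and> (\<forall>i\<in>{..<n} - J. (a \<circ> f) i \<inter> C = {})"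
      proof (intro conjI ballI)
        fix i assume "i \<in> J"
        then have "i < n" using J by auto
        then show "(a \<circ> f) i \<subseteq> C" using C fX fJ \<open>i \<in> J\<close> by simp
      next
        fix i assume "i \<in> {..<n} - J"
        then show "(a \<circ> f) i \<inter> C = {}" using C fX fJ by simp
      qed
      with \<open>C \<in> \<C>\<close> show "\<exists>C\<in>\<C>. (\<forall>i\<in>J. (a \<circ> f) i \<subseteq> C) \<and> (\<forall>i\<in>{..<n} - J. (a \<circ> f) i \<inter> C = {})" ..
    qed
  qed
qed

theorem mainTheorem8:
  fixes M :: "'a measure" and \<C> :: "'a set set" and I :: "'a set set" and n :: nat
  assumes "\<C> \<subseteq> sets M"
    and "is_ideal_on (space M) I"
  shows "(vc_dim_ge (stone_space (space M) I) ((\<lambda>C \<xi>. C \<in> \<xi>) ` \<C>) n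
           \<longleftrightarrow> (\<exists>A :: nat \<Rightarrow> 'a set. (\<forall>i<n. A i \<subseteq> space M \<and> A i \<notin> I) \<and>
                 (\<forall>J \<subseteq> {..<n}. \<exists>C\<in>\<C>. (\<forall>i\<in>J. A i \<subseteq> C) \<and> (\<forall>i\<in>{..<n} - J. A i \<inter> C = {}))))
       \<and> (vc_dim_ge (stone_space (space M) I) ((\<lambda>C \<xi>. C \<in> \<xi>) ` \<C>) n
           \<longleftrightarrow> (\<exists>A :: nat \<Rightarrow> 'a set. (\<forall>i<n. A i \<in> sets M \<and> A i \<notin> I) \<and>
                 (\<forall>J \<subseteq> {..<n}. \<exists>C\<in>\<C>. (\<forall>i\<in>J. A i \<subseteq> C) \<and> (\<forall>i\<in>{..<n} - J. A i \<inter> C = {}))))"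
  (is "(?V \<longleftrightarrow> ?P1) \<and> (?V \<longleftrightarrow> ?P2)")
proof -
  have P1: "?P1 \<longleftrightarrow> (\<exists>A. (\<forall>i<n. A i \<subseteq> space M \<and> A i \<notin> I) \<and> separates \<C> A n)"
    and P2: "?P2 \<longleftrightarrow> (\<exists>A. (\<forall>i<n. A i \<in> sets M \<and> A i \<notin> I) \<and> separates \<C> A n)"
    unfolding separates_def by (rule refl)+
  have to_measurable: "?V \<Longrightarrow> ?P2"
    unfolding P2 using vc_dim_gives_separated_family[OF sets.algebra_axioms assms(1)] by metis
  have measurable_to_subsets: "?P2 \<Longrightarrow> ?P1"
    unfolding P1 P2 using sets.sets_into_space by metis
  have from_subsets: "?P1 \<Longrightarrow> ?V"
    unfolding P1 using separated_family_gives_vc_dim[OF assms(2)] assms(1) sets.space_closed by blast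
  show ?thesis using to_measurable measurable_to_subsets from_subsets by blast
qed

end
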